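(* Let $M,N\in\Lambda$. If $\mathrm{BT}(M)=\mathrm{BT}(N)$ then $M\equiv N$.
   Context: Call-by-value $\lambda$-calculus with permutations: $\lambda$-terms and values are $M,N::=V\mid MN$, $V::=x\mid\lambda x.M$, up to $\alpha$-conversion. Rules: $(\beta_v)$ $(\lambda x.M)V\to M\{x:=V\}$ if $V$ is a value; $(\sigma_1)$ $(\lambda x.M)NP\to(\lambda x.MP)N$ if $x\notin\mathrm{FV}(P)$; $(\sigma_3)$ $V((\lambda x.M)N)\to(\lambda x.VM)N$ if $V$ is a value and $x\notin\mathrm{FV}(V)$. $\to_{\beta_v}$ is the contextual closure of $(\beta_v)$ alone, $\to_{\mathsf v}$ the contextual closure of all three rules, $\twoheadrightarrow$ denotes reflexive-transitive closures. Approximants: $\Lambda_\bot$ is the set of $\lambda$-terms possibly containing a constant $\bot$. $\sqsubseteq$ is the smallest context-closed preorder on $\Lambda_\bot$ with $\bot\sqsubseteq x$ and $\bot\sqsubseteq\lambda x.M$. The set $\mathcal A$ of approximants is generated by ($k\ge0$): $A::=B\mid C$; $B::=x\mid\lambda x.A\mid\bot\mid xBA_1\cdots A_k$; $C::=(\lambda x.A)(yBA_1\cdots A_k)$. For $M\in\Lambda$, $\mathcal A(M)=\{A\in\mathcal A\mid\exists N\in\Lambda,\ M\twoheadrightarrow_{\mathsf v}N,\ A\sqsubseteq N\}$, and the Böhm tree $\mathrm{BT}(M)=\bigsqcup\mathcal A(M)$; in particular $\mathrm{BT}(M)=\mathrm{BT}(N)$ iff $\mathcal A(M)=\mathcal A(N)$.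 Observational equivalence: $M\equiv N$ iff for every single-hole context $C[-]$ such that $C[M]$ and $C[N]$ are closed, $C[M]\twoheadrightarrow_{\beta_v}V$ for some value $V$ if and only if $C[N]\twoheadrightarrow_{\beta_v}U$ for some value $U$. *)

theory Defs
  imports Main
begin

section \<open>Lambda terms (de Bruijn indices, so terms are identified up to alpha-conversion)\<close>

datatype trm = Var nat | Lam trm | App trm trm

fun is_value :: "trm \<Rightarrow> bool" where
  "is_value (Var x) = True"
| "is_value (Lam M) = True"
| "is_value (App M N) = False"

fun lift :: "nat \<Rightarrow> trm \<Rightarrow> trm" where
  "lift k (Var i) = (if i < k then Var i else Var (Suc i))"
| "lift k (Lam M) = Lam (lift (Suc k) M)"
| "lift k (App M N) = App (lift k M) (lift k N)"

fun subst :: "trm \<Rightarrow> nat \<Rightarrow> trm \<Rightarrow> trm" where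
  "subst (Var i) k s = (if i < k then Var i else if i = k then s else Var (i - 1))"
| "subst (Lam M) k s = Lam (subst M (Suc k) (lift 0 s))"
| "subst (App M N) k s = App (subst M k s) (subst N k s)"

fun closed_at :: "nat \<Rightarrow> trm \<Rightarrow> bool" where
  "closed_at k (Var i) = (i < k)"
| "closed_at k (Lam M) = closed_at (Suc k) M"
| "closed_at k (App M N) = (closed_at k M \<and> closed_at k N)"

definition closed :: "trm \<Rightarrow> bool" where
  "closed M \<longleftrightarrow> closed_at 0 M"

text \<open>Root rules. The side conditions \<open>x \<notin> FV(P)\<close>, \<open>x \<notin> FV(V)\<close> correspond to lifting
  \<open>P\<close> / \<open>V\<close> when moved under the binder.\<close>
inductive beta_v_rule :: "trm \<Rightarrow> trm \<Rightarrow> bool" where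
  "is_value V \<Longrightarrow> beta_v_rule (App (Lam M) V) (subst M 0 V)"

inductive v_rule :: "trm \<Rightarrow> trm \<Rightarrow> bool" where
  beta_v: "is_value V \<Longrightarrow> v_rule (App (Lam M) V) (subst M 0 V)"
| sigma1: "v_rule (App (App (Lam M) N) P) (App (Lam (App M (lift 0 P))) N)"
| sigma3: "is_value V \<Longrightarrow> v_rule (App V (App (Lam M) N)) (App (Lam (App (lift 0 V) M)) N)"

inductive ctx_closure :: "(trm \<Rightarrow> trm \<Rightarrow> bool) \<Rightarrow> trm \<Rightarrow> trm \<Rightarrow> bool" for R where
  root: "R M N \<Longrightarrow> ctx_closure R M N"
| lam: "ctx_closure R M N \<Longrightarrow> ctx_closure R (Lam M) (Lam N)"
| appL: "ctx_closure R M N \<Longrightarrow> ctx_closure R (App M P) (App N P)"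
| appR: "ctx_closure R M N \<Longrightarrow> ctx_closure R (App P M) (App P N)"

definition step_beta_v :: "trm \<Rightarrow> trm \<Rightarrow> bool" where
  "step_beta_v = ctx_closure beta_v_rule"

definition step_v :: "trm \<Rightarrow> trm \<Rightarrow> bool" where
  "step_v = ctx_closure v_rule"

abbreviation red_beta_v :: "trm \<Rightarrow> trm \<Rightarrow> bool" where
  "red_beta_v \<equiv> step_beta_v\<^sup>*\<^sup>*"

abbreviation red_v :: "trm \<Rightarrow> trm \<Rightarrow> bool" where
  "red_v \<equiv> step_v\<^sup>*\<^sup>*"

datatype btrm = BVar nat | BLam btrm | BApp btrm btrm | Bot

fun embed :: "trm \<Rightarrow> btrm" where
  "embed (Var x) = BVar x"
| "embed (Lam M) = BLam (embed M)"
| "embed (App M N) = BApp (embed M) (embed N)"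

inductive below :: "btrm \<Rightarrow> btrm \<Rightarrow> bool" where
  bot_var: "below Bot (BVar x)"
| bot_lam: "below Bot (BLam M)"
| refl: "below M M"
| trans: "below M N \<Longrightarrow> below N P \<Longrightarrow> below M P"
| lam: "below M N \<Longrightarrow> below (BLam M) (BLam N)"
| appL: "below M N \<Longrightarrow> below (BApp M P) (BApp N P)"
| appR: "below M N \<Longrightarrow> below (BApp P M) (BApp P N)"

text \<open>Grammar of approximants: \<open>apxA\<close> = A, \<open>apxB\<close> = B, \<open>apxH\<close> = terms of the form
  \<open>x B A\<^sub>1 \<dots> A\<^sub>k\<close> (k \<ge> 0).\<close>
inductive apxA :: "btrm \<Rightarrow> bool" and apxB :: "btrm \<Rightarrow> bool" and apxH :: "btrm \<Rightarrow> bool" where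
  A_B: "apxB t \<Longrightarrow> apxA t"
| A_C: "apxA A \<Longrightarrow> apxH t \<Longrightarrow> apxA (BApp (BLam A) t)"
| B_var: "apxB (BVar x)"
| B_lam: "apxA A \<Longrightarrow> apxB (BLam A)"
| B_bot: "apxB Bot"
| B_head: "apxH t \<Longrightarrow> apxB t"
| H_base: "apxB B \<Longrightarrow> apxH (BApp (BVar x) B)"
| H_app: "apxH t \<Longrightarrow> apxA A \<Longrightarrow> apxH (BApp t A)"

definition approximants :: "trm \<Rightarrow> btrm set" where
  "approximants M = {A. apxA A \<and> (\<exists>N. red_v M N \<and> below A (embed N))}"

text \<open>The Boehm tree is the lub of the approximants; it is determined by (and determines)
  the set of approximants, so we represent it by that set.\<close>
definition BT :: "trm \<Rightarrow> btrm set" where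
  "BT M = approximants M"

datatype ctx = Hole | CLam ctx | CAppL ctx trm | CAppR trm ctx

fun plug :: "ctx \<Rightarrow> trm \<Rightarrow> trm" where
  "plug Hole M = M"
| "plug (CLam C) M = Lam (plug C M)"
| "plug (CAppL C P) M = App (plug C M) P"
| "plug (CAppR P C) M = App P (plug C M)"

definition obs_equiv :: "trm \<Rightarrow> trm \<Rightarrow> bool" where
  "obs_equiv M N \<longleftrightarrow> (\<forall>C. closed (plug C M) \<and> closed (plug C N) \<longrightarrow>
     ((\<exists>V. is_value V \<and> red_beta_v (plug C M) V) \<longleftrightarrow> (\<exists>U. is_value U \<and> red_beta_v (plug C N) U)))"

end

theory Submission
  imports Defs "HOL-Library.Multiset" "HOL-Library.Function_Algebras" "HOL-Library.Product_Lexorder"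
begin

text \<open>Interpret terms in the relational model of call-by-value, presented as a
  non-idempotent intersection type system; the typings of \<open>M\<close> form its semantics. Typings are
  preserved by \<open>v\<close>-expansion and are monotone under contexts, and a term has the empty type in
  the empty environment iff it \<open>\<beta>\<^sub>v\<close>-converges; so terms with the same typings are
  observationally equivalent. Conversely, every typing of \<open>M\<close> is forced by a single approximant
  of \<open>M\<close>: reducing along a typing derivation, \<open>\<beta>\<^sub>v\<close>-steps shrink the derivation and
  \<open>\<sigma>\<close>-steps shrink a multiplicative term size, and at the end the typed part of the reduct is an
  approximant all of whose refinements carry the typing. Hence terms with the same approximants
  have the same typings.\<close>

section \<open>Multi-type assignment\<close>

datatype ty = Arr "ty multiset" "ty multiset"

type_synonym mtype = "ty multiset"

text \<open>Environments are total; \<open>{#}\<close> marks an unused variable and \<open>+\<close> is pointwise union.\<close>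
type_synonym env = "nat \<Rightarrow> mtype"

definition env_ins :: "nat \<Rightarrow> mtype \<Rightarrow> env \<Rightarrow> env" where
  "env_ins k s G = (\<lambda>i. if i < k then G i else if i = k then s else G (i - 1))"

definition env_del :: "nat \<Rightarrow> env \<Rightarrow> env" where
  "env_del k G = (\<lambda>i. if i < k then G i else G (Suc i))"

datatype premise = Premise (parg: mtype) (penv: env) (pres: mtype) (psize: nat)

definition arrow :: "premise \<Rightarrow> ty" where
  "arrow p = Arr (parg p) (pres p)"

lemma arrow_eta: "arrow = (\<lambda>p. Arr (parg p) (pres p))"
  by (rule ext) (simp add: arrow_def)

text \<open>\<open>typed G M t n\<close>: a derivation of \<open>G \<turnstile> M : t\<close> with \<open>n\<close> application rules.\<close>
inductive typed :: "env \<Rightarrow> trm \<Rightarrow> mtype \<Rightarrow> nat \<Rightarrow> bool" where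
  T_Var: "typed (0(x := s)) (Var x) s 0"
| T_Lam: "(\<forall>p. p \<in># P \<longrightarrow> typed (env_ins 0 (parg p) (penv p)) M (pres p) (psize p)) \<Longrightarrow>
    typed (\<Sum>p\<in>#P. penv p) (Lam M) (image_mset arrow P) (\<Sum>p\<in>#P. psize p)"
| T_App: "typed G M {#Arr s t#} n \<Longrightarrow> typed D N s m \<Longrightarrow> typed (G + D) (App M N) t (Suc (n + m))"

inductive_cases typed_VarE: "typed G (Var x) t n"
inductive_cases typed_LamE: "typed G (Lam M) t n"
inductive_cases typed_AppE: "typed G (App M N) t n"

lemma env_ins_add: "env_ins k (s1 + s2) (G1 + G2) = env_ins k s1 G1 + env_ins k s2 G2"
  by (auto simp: env_ins_def fun_eq_iff)

lemma env_ins_empty_0 [simp]: "env_ins k {#} 0 = 0"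
  by (auto simp: env_ins_def fun_eq_iff)

lemma env_del_add: "env_del k (G1 + G2) = env_del k G1 + env_del k G2"
  by (auto simp: env_del_def fun_eq_iff)

lemma env_ins_del: "G k = s \<Longrightarrow> env_ins k s (env_del k G) = G"
  by (auto simp: env_ins_def env_del_def fun_eq_iff)

lemma env_del_ins [simp]: "env_del k (env_ins k s G) = G"
  by (auto simp: env_ins_def env_del_def fun_eq_iff)

lemma env_ins_same [simp]: "env_ins k s G k = s"
  by (auto simp: env_ins_def)

lemma env_ins_0_Suc [simp]: "env_ins 0 s G (Suc i) = G i"
  by (simp add: env_ins_def)

lemma env_ins_commute: "env_ins (Suc k) s (env_ins 0 r G) = env_ins 0 r (env_ins k s G)"
  by (auto simp: env_ins_def fun_eq_iff nat.case split: nat.splits)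

lemma env_del_ins_0: "env_del (Suc k) (env_ins 0 r G) = env_ins 0 r (env_del k G)"
  by (auto simp: env_ins_def env_del_def fun_eq_iff)

lemma env_add_eq_0_iff: "(G::env) + D = 0 \<longleftrightarrow> G = 0 \<and> D = 0"
  by (auto simp: fun_eq_iff)

lemma plus_env_eta [simp]: "(\<lambda>a. (f::env) a + g a) = f + g"
  by (simp add: fun_eq_iff)

lemma env_empty_eq_0 [simp]: "(\<lambda>a::nat. ({#}::mtype)) = 0"
  by (simp add: fun_eq_iff)

lemma env_upd_empty [simp]: "(0::env)(x := {#}) = 0"
  by (simp add: fun_eq_iff)

lemma sum_env_apply: "(\<Sum>p\<in>#P. f p :: env) i = (\<Sum>p\<in>#P. f p i)"
  by (induction P) auto

lemma env_ins_sum: "env_ins k {#} (\<Sum>p\<in>#P. f p) = (\<Sum>p\<in>#P. env_ins k {#} (f p))"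
  by (auto simp: fun_eq_iff env_ins_def sum_env_apply)

lemma env_del_sum: "env_del k (\<Sum>p\<in>#P. f p) = (\<Sum>p\<in>#P. env_del k (f p))"
  by (auto simp: fun_eq_iff env_del_def sum_env_apply)

lemma typed_Lam_single: "typed (env_ins 0 a G) N b n \<Longrightarrow> typed G (Lam N) {#Arr a b#} n"
  using T_Lam[of "{#Premise a G b n#}" N] by (simp add: arrow_def)

lemma typed_Lam_singleD: "typed G (Lam M) {#Arr a b#} n \<Longrightarrow> typed (env_ins 0 a G) M b n"
proof (elim typed_LamE)
  fix P assume P: "\<forall>p. p \<in># P \<longrightarrow> typed (env_ins 0 (parg p) (penv p)) M (pres p) (psize p)"
    "G = (\<Sum>p\<in>#P. penv p)" "{#Arr a b#} = image_mset arrow P" "n = (\<Sum>p\<in>#P. psize p)"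
  then have "size P = 1" by (metis size_image_mset size_single)
  then obtain p where p: "P = {#p#}" using size_1_singleton_mset by blast
  then have "parg p = a" "pres p = b" using P(3) by (auto simp: arrow_def)
  then show ?thesis using P p by auto
qed

lemma typed_Lam_add:
  "typed G1 (Lam M) t1 n1 \<Longrightarrow> typed G2 (Lam M) t2 n2 \<Longrightarrow> typed (G1 + G2) (Lam M) (t1 + t2) (n1 + n2)"
proof (elim typed_LamE)
  fix P1 P2
  assume "\<forall>p. p \<in># P1 \<longrightarrow> typed (env_ins 0 (parg p) (penv p)) M (pres p) (psize p)"
    "\<forall>p. p \<in># P2 \<longrightarrow> typed (env_ins 0 (parg p) (penv p)) M (pres p) (psize p)"
    "G1 = (\<Sum>p\<in>#P1. penv p)" "t1 = image_mset arrow P1" "n1 = (\<Sum>p\<in>#P1. psize p)"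
    "G2 = (\<Sum>p\<in>#P2. penv p)" "t2 = image_mset arrow P2" "n2 = (\<Sum>p\<in>#P2. psize p)"
  then show ?thesis using T_Lam[of "P1 + P2" M] by auto
qed

text \<open>The typings of a value form a commutative monoid: they can be merged and split. This is
  what substituting a value for a variable of multi-type requires.\<close>

lemma typed_value_empty: "is_value V \<Longrightarrow> typed 0 V {#} 0"
  using T_Var[of _ "{#}"] T_Lam[of "{#}"] by (cases V) auto

lemma typed_value_emptyD: "is_value V \<Longrightarrow> typed D V {#} m \<Longrightarrow> D = 0 \<and> m = 0"
  by (cases V) (auto elim!: typed_VarE typed_LamE)

lemma typed_value_add:
  assumes "is_value V" "typed G1 V t1 n1" "typed G2 V t2 n2"
  shows "typed (G1 + G2) V (t1 + t2) (n1 + n2)"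
proof (cases V)
  case (Var x)
  from assms have "G1 = 0(x := t1)" "G2 = 0(x := t2)" "n1 = 0" "n2 = 0"
    using Var by (auto elim: typed_VarE)
  moreover have "(0::env)(x := t1) + 0(x := t2) = 0(x := t1 + t2)" by (auto simp: fun_eq_iff)
  ultimately show ?thesis using Var T_Var[of x "t1 + t2"] by simp
next
  case (Lam M)
  then show ?thesis using typed_Lam_add assms by metis
qed (use assms in simp)

lemma typed_value_split:
  assumes "is_value V" "typed D V (t1 + t2) m"
  shows "\<exists>D1 D2 m1 m2. D = D1 + D2 \<and> m = m1 + m2 \<and> typed D1 V t1 m1 \<and> typed D2 V t2 m2"
proof (cases V)
  case (Var x)
  from assms have "D = 0(x := t1 + t2)" "m = 0" using Var by (auto elim: typed_VarE)
  moreover have "(0::env)(x := t1) + 0(x := t2) = 0(x := t1 + t2)" by (auto simp: fun_eq_iff)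
  ultimately show ?thesis using Var T_Var[of x] by (metis add_0)
next
  case (Lam M)
  from assms obtain P where P: "\<forall>p. p \<in># P \<longrightarrow> typed (env_ins 0 (parg p) (penv p)) M (pres p) (psize p)"
    "D = (\<Sum>p\<in>#P. penv p)" "t1 + t2 = image_mset arrow P" "m = (\<Sum>p\<in>#P. psize p)"
    using Lam by (auto elim: typed_LamE)
  then obtain P1 P2 where "P = P1 + P2" "t1 = image_mset arrow P1" "t2 = image_mset arrow P2"
    using image_mset_eq_plusD[of arrow P t1 t2] by metis
  then show ?thesis using P Lam T_Lam[of P1 M] T_Lam[of P2 M] by auto
qed (use assms in simp)

lemma typed_lift: "typed G M t n \<Longrightarrow> typed (env_ins k {#} G) (lift k M) t n"
proof (induction arbitrary: k rule: typed.induct)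
  case (T_Var x s)
  have "env_ins k {#} (0(x := s)) = 0((if x < k then x else Suc x) := s)"
    by (auto simp: env_ins_def fun_eq_iff)
  moreover have "lift k (Var x) = Var (if x < k then x else Suc x)" by simp
  ultimately show ?case by (metis typed.T_Var)
next
  case (T_Lam P M)
  let ?P = "image_mset (\<lambda>p. Premise (parg p) (env_ins k {#} (penv p)) (pres p) (psize p)) P"
  have "\<forall>p. p \<in># ?P \<longrightarrow> typed (env_ins 0 (parg p) (penv p)) (lift (Suc k) M) (pres p) (psize p)"
    using T_Lam by (auto simp: env_ins_commute[symmetric])
  from typed.T_Lam[OF this] show ?case
    by (simp add: env_ins_sum image_mset.compositionality comp_def arrow_eta)
next
  case (T_App G M s t n D N m)
  then show ?case using typed.T_App env_ins_add[of k "{#}" "{#}"] by fastforce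
qed

lemma typed_liftD: "typed T (lift k M) t n \<Longrightarrow> T k = {#} \<and> typed (env_del k T) M t n"
proof (induction M arbitrary: k T t n)
  case (Var i)
  then have "typed T (Var (if i < k then i else Suc i)) t n" by (cases "i < k") auto
  then have T: "T = 0((if i < k then i else Suc i) := t)" and n0: "n = 0"
    by (auto elim: typed_VarE)
  have d: "env_del k (0((if i < k then i else Suc i) := t)) = 0(i := t)"
    by (auto simp: env_del_def fun_eq_iff)
  have "T k = {#}" unfolding T by auto
  moreover have "typed (env_del k T) (Var i) t n" unfolding T d n0 by (rule T_Var)
  ultimately show ?case by blast
next
  case (Lam M)
  then obtain P where P:
    "\<forall>p. p \<in># P \<longrightarrow> typed (env_ins 0 (parg p) (penv p)) (lift (Suc k) M) (pres p) (psize p)"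
    "T = (\<Sum>p\<in>#P. penv p)" "t = image_mset arrow P" "n = (\<Sum>p\<in>#P. psize p)"
    by (auto elim: typed_LamE)
  have prem: "penv p k = {#} \<and> typed (env_ins 0 (parg p) (env_del k (penv p))) M (pres p) (psize p)"
    if "p \<in># P" for p
    using Lam.IH[OF P(1)[rule_format, OF that]] by (simp only: env_del_ins_0 env_ins_0_Suc)
  let ?P = "image_mset (\<lambda>p. Premise (parg p) (env_del k (penv p)) (pres p) (psize p)) P"
  have "\<forall>p. p \<in># ?P \<longrightarrow> typed (env_ins 0 (parg p) (penv p)) M (pres p) (psize p)" using prem by auto
  from T_Lam[OF this] have "typed (env_del k T) (Lam M) t n"
    using P by (simp add: env_del_sum image_mset.compositionality comp_def arrow_eta)
  moreover have "T k = {#}" using P(2) prem by (simp add: sum_env_apply)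
  ultimately show ?case by simp
next
  case (App M1 M2)
  then obtain G D s n1 n2 where "T = G + D" "typed G (lift k M1) {#Arr s t#} n1"
    "typed D (lift k M2) s n2" "n = Suc (n1 + n2)"
    by (auto elim: typed_AppE)
  then show ?case using App.IH T_App by (fastforce simp: env_del_add)
qed

section \<open>Substitution\<close>

lemma is_value_lift [simp]: "is_value (lift k V) = is_value V"
  by (cases V) auto

lemma typed_subst_Var:
  assumes "typed (env_ins k \<sigma> G) (Var i) t n" "typed D s \<sigma> m" "is_value s"
  shows "typed (G + D) (subst (Var i) k s) t (n + m)"
proof -
  from assms(1) have E: "env_ins k \<sigma> G = 0(i := t)" "n = 0" by (auto elim: typed_VarE)
  then have G: "G = env_del k (0(i := t))" and \<sigma>: "\<sigma> = (0(i := t)) k"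
    by (metis env_del_ins, metis env_ins_same)
  consider "i < k" | "i = k" | "k < i" by linarith
  then show ?thesis
  proof cases
    case 1
    then have "\<sigma> = {#}" and G': "G = 0(i := t)" using G \<sigma> by (auto simp: env_del_def fun_eq_iff)
    then have "D = 0" "m = 0" using typed_value_emptyD assms(2,3) by auto
    moreover have "subst (Var i) k s = Var i" using 1 by simp
    ultimately show ?thesis unfolding G' E(2) by (simp add: T_Var)
  next
    case 2
    then have "\<sigma> = t" "G = 0" using G \<sigma> by (auto simp: env_del_def fun_eq_iff)
    then show ?thesis using 2 E assms(2) by simp
  next
    case 3
    then have "\<sigma> = {#}" and G': "G = 0(i - 1 := t)" using G \<sigma> by (auto simp: env_del_def fun_eq_iff)
    then have "D = 0" "m = 0" using typed_value_emptyD assms(2,3) by auto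
    moreover have "subst (Var i) k s = Var (i - 1)" using 3 by simp
    ultimately show ?thesis unfolding G' E(2) by (simp add: T_Var)
  qed
qed

text \<open>The abstraction case of the substitution lemma: the type of the substituted variable is the
  sum of its types in the premises, so the typing of the value is split accordingly.\<close>
lemma typed_Lam_subst_premises:
  assumes "is_value s"
    and "\<forall>p. p \<in># P \<longrightarrow> (\<forall>Dp mp. typed Dp s (penv p k) mp \<longrightarrow>
           typed (env_ins 0 (parg p) (env_del k (penv p) + Dp)) N (pres p) (psize p + mp))"
    and "typed D s (\<Sum>p\<in>#P. penv p k) m"
  shows "typed ((\<Sum>p\<in>#P. env_del k (penv p)) + D) (Lam N) (image_mset arrow P) ((\<Sum>p\<in>#P. psize p) + m)"
  using assms(2,3)
proof (induction P arbitrary: D m)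
  case empty
  then have "D = 0" "m = 0" using typed_value_emptyD assms(1) by auto
  then show ?case using T_Lam[of "{#}" N] by simp
next
  case (add p P)
  have "typed D s (penv p k + (\<Sum>p\<in>#P. penv p k)) m" using add.prems(2) by simp
  from typed_value_split[OF assms(1) this] obtain D1 D2 m1 m2 where
    D: "D = D1 + D2" "m = m1 + m2" "typed D1 s (penv p k) m1" "typed D2 s (\<Sum>p\<in>#P. penv p k) m2"
    by blast
  have "\<forall>p'. p' \<in># P \<longrightarrow> (\<forall>Dp mp. typed Dp s (penv p' k) mp \<longrightarrow>
      typed (env_ins 0 (parg p') (env_del k (penv p') + Dp)) N (pres p') (psize p' + mp))"
    using add.prems(1) by simp
  from add.IH[OF this D(4)]
  have P: "typed ((\<Sum>p\<in>#P. env_del k (penv p)) + D2) (Lam N) (image_mset arrow P) ((\<Sum>p\<in>#P. psize p) + m2)" .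
  have "typed (env_ins 0 (parg p) (env_del k (penv p) + D1)) N (pres p) (psize p + m1)"
    using add.prems(1) D(3) by simp
  then have "typed (env_del k (penv p) + D1) (Lam N) {#arrow p#} (psize p + m1)"
    using typed_Lam_single by (simp add: arrow_def)
  from typed_Lam_add[OF this P]
  have "typed (env_del k (penv p) + D1 + ((\<Sum>p\<in>#P. env_del k (penv p)) + D2)) (Lam N)
      ({#arrow p#} + image_mset arrow P) (psize p + m1 + ((\<Sum>p\<in>#P. psize p) + m2))" .
  moreover have "env_del k (penv p) + D1 + ((\<Sum>p\<in>#P. env_del k (penv p)) + D2) =
      (\<Sum>p\<in>#add_mset p P. env_del k (penv p)) + D"
    using D(1) by (simp add: add_ac)
  moreover have "psize p + m1 + ((\<Sum>p\<in>#P. psize p) + m2) = (\<Sum>p\<in>#add_mset p P. psize p) + m"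
    using D(2) by simp
  moreover have "{#arrow p#} + image_mset arrow P = image_mset arrow (add_mset p P)" by simp
  ultimately show ?case by metis
qed

lemma typed_subst:
  assumes "typed (env_ins k \<sigma> G) M t n" "typed D s \<sigma> m" "is_value s"
  shows "typed (G + D) (subst M k s) t (n + m)"
  using assms
proof (induction M arbitrary: k \<sigma> G t n s D m)
  case (Var i)
  then show ?case by (rule typed_subst_Var)
next
  case (Lam M)
  from Lam.prems(1) obtain P where P:
    "\<forall>p. p \<in># P \<longrightarrow> typed (env_ins 0 (parg p) (penv p)) M (pres p) (psize p)"
    "env_ins k \<sigma> G = (\<Sum>p\<in>#P. penv p)" "t = image_mset arrow P" "n = (\<Sum>p\<in>#P. psize p)"
    by (auto elim: typed_LamE)
  have "\<forall>p. p \<in># P \<longrightarrow> (\<forall>Dp mp. typed Dp s (penv p k) mp \<longrightarrow>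
      typed (env_ins 0 (parg p) (env_del k (penv p) + Dp)) (subst M (Suc k) (lift 0 s)) (pres p) (psize p + mp))"
  proof (intro allI impI)
    fix p Dp mp assume p: "p \<in># P" and D: "typed Dp s (penv p k) mp"
    have "env_ins 0 (parg p) (penv p) = env_ins (Suc k) (penv p k) (env_ins 0 (parg p) (env_del k (penv p)))"
      by (simp add: env_ins_commute env_ins_del)
    with P(1) p have "typed (env_ins (Suc k) (penv p k) (env_ins 0 (parg p) (env_del k (penv p)))) M (pres p) (psize p)"
      by metis
    from Lam.IH[OF this typed_lift[OF D, of 0]] Lam.prems(3)
    show "typed (env_ins 0 (parg p) (env_del k (penv p) + Dp)) (subst M (Suc k) (lift 0 s)) (pres p) (psize p + mp)"
      by (simp add: env_ins_add[symmetric])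
  qed
  moreover have "G = (\<Sum>p\<in>#P. env_del k (penv p))" using P(2) by (metis env_del_ins env_del_sum)
  moreover have "\<sigma> = (\<Sum>p\<in>#P. penv p k)" using P(2) by (metis env_ins_same sum_env_apply)
  ultimately show ?case using typed_Lam_subst_premises[OF Lam.prems(3)] Lam.prems(2) P(3,4) by simp
next
  case (App M1 M2)
  from App.prems(1) obtain G1 G2 a n1 n2 where A: "env_ins k \<sigma> G = G1 + G2"
    "typed G1 M1 {#Arr a t#} n1" "typed G2 M2 a n2" "n = Suc (n1 + n2)"
    by (auto elim: typed_AppE)
  have "\<sigma> = G1 k + G2 k" using A(1) by (metis env_ins_same plus_fun_apply)
  with App.prems(2) typed_value_split[OF App.prems(3)] obtain D1 D2 m1 m2 where
    D: "D = D1 + D2" "m = m1 + m2" "typed D1 s (G1 k) m1" "typed D2 s (G2 k) m2"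
    by metis
  have 1: "typed (env_del k G1 + D1) (subst M1 k s) {#Arr a t#} (n1 + m1)"
    using App.IH(1)[of k "G1 k" "env_del k G1", OF _ D(3) App.prems(3)] A(2) by (simp add: env_ins_del)
  have 2: "typed (env_del k G2 + D2) (subst M2 k s) a (n2 + m2)"
    using App.IH(2)[of k "G2 k" "env_del k G2", OF _ D(4) App.prems(3)] A(3) by (simp add: env_ins_del)
  have "G = env_del k G1 + env_del k G2" using A(1) by (metis env_del_ins env_del_add)
  then have "env_del k G1 + D1 + (env_del k G2 + D2) = G + D" using D(1) by (simp add: fun_eq_iff add_ac)
  moreover have "Suc (n1 + m1 + (n2 + m2)) = n + m" using A(4) D(2) by simp
  ultimately show ?case using T_App[OF 1 2] by (metis subst.simps(3))
qed

lemma typed_substD_Var: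
  assumes "typed G (subst (Var i) k s) t n" "is_value s"
  shows "\<exists>G1 D \<sigma> n1 m. G = G1 + D \<and> typed (env_ins k \<sigma> G1) (Var i) t n1 \<and> typed D s \<sigma> m"
proof -
  consider "i < k" | "i = k" | "k < i" by linarith
  then show ?thesis
  proof cases
    case 1
    then have "G = 0(i := t)" using assms(1) by (auto elim: typed_VarE)
    with 1 have "env_ins k {#} G = 0(i := t)" by (auto simp: env_ins_def fun_eq_iff)
    then show ?thesis using T_Var[of i t] typed_value_empty[OF assms(2)] by (metis add.right_neutral)
  next
    case 2
    then have "typed G s t n" using assms(1) by simp
    moreover have "env_ins k t 0 = 0(i := t)" using 2 by (auto simp: env_ins_def fun_eq_iff)
    ultimately show ?thesis using T_Var[of i t] by (metis add_0)
  next
    case 3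
    then have "G = 0(i - 1 := t)" using assms(1) by (auto elim: typed_VarE)
    with 3 have "env_ins k {#} G = 0(i := t)" by (auto simp: env_ins_def fun_eq_iff)
    then show ?thesis using T_Var[of i t] typed_value_empty[OF assms(2)] by (metis add.right_neutral)
  qed
qed

lemma typed_Lam_substD_premises:
  assumes "is_value s"
    and "\<forall>p. p \<in># P \<longrightarrow> (\<exists>G1 D \<rho> n1 m. penv p = G1 + D \<and>
           typed (env_ins 0 (parg p) (env_ins k \<rho> G1)) M (pres p) n1 \<and> typed D s \<rho> m)"
  shows "\<exists>G1 D \<sigma> n1 m. (\<Sum>p\<in>#P. penv p) = G1 + D \<and>
           typed (env_ins k \<sigma> G1) (Lam M) (image_mset arrow P) n1 \<and> typed D s \<sigma> m"
  using assms(2)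
proof (induction P)
  case empty
  have "typed (env_ins k {#} 0) (Lam M) (image_mset arrow {#}) 0" using T_Lam[of "{#}" M] by simp
  then show ?case using typed_value_empty[OF assms(1)] by force
next
  case (add p P)
  from add.prems obtain G1 D \<rho> n1 m where p: "penv p = G1 + D"
    "typed (env_ins 0 (parg p) (env_ins k \<rho> G1)) M (pres p) n1" "typed D s \<rho> m"
    by auto
  from add.IH add.prems obtain G1' D' \<sigma>' n1' m' where P: "(\<Sum>p\<in>#P. penv p) = G1' + D'"
    "typed (env_ins k \<sigma>' G1') (Lam M) (image_mset arrow P) n1'" "typed D' s \<sigma>' m'"
    by auto
  from typed_Lam_add[OF typed_Lam_single[OF p(2)] P(2)]
  have "typed (env_ins k (\<rho> + \<sigma>') (G1 + G1')) (Lam M) (image_mset arrow (add_mset p P)) (n1 + n1')"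
    by (simp add: env_ins_add arrow_def)
  moreover have "typed (D + D') s (\<rho> + \<sigma>') (m + m')" using typed_value_add[OF assms(1) p(3) P(3)] .
  moreover have "(\<Sum>p\<in>#add_mset p P. penv p) = (G1 + G1') + (D + D')" using p(1) P(1) by (simp add: add_ac)
  ultimately show ?case by blast
qed

lemma typed_substD:
  assumes "typed G (subst M k s) t n" "is_value s"
  shows "\<exists>G1 D \<sigma> n1 m. G = G1 + D \<and> typed (env_ins k \<sigma> G1) M t n1 \<and> typed D s \<sigma> m"
  using assms
proof (induction M arbitrary: k G t n s)
  case (Var i)
  then show ?case by (rule typed_substD_Var)
next
  case (Lam M)
  from Lam.prems(1) obtain P where P:
    "\<forall>p. p \<in># P \<longrightarrow> typed (env_ins 0 (parg p) (penv p)) (subst M (Suc k) (lift 0 s)) (pres p) (psize p)"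
    "G = (\<Sum>p\<in>#P. penv p)" "t = image_mset arrow P" "n = (\<Sum>p\<in>#P. psize p)"
    by (auto elim: typed_LamE)
  have "\<forall>p. p \<in># P \<longrightarrow> (\<exists>G1 D \<rho> n1 m. penv p = G1 + D \<and>
      typed (env_ins 0 (parg p) (env_ins k \<rho> G1)) M (pres p) n1 \<and> typed D s \<rho> m)"
  proof (intro allI impI)
    fix p assume "p \<in># P"
    from Lam.IH[OF P(1)[rule_format, OF this]] Lam.prems(2) obtain T1 T2 \<rho> n1 m where
      T: "env_ins 0 (parg p) (penv p) = T1 + T2" "typed (env_ins (Suc k) \<rho> T1) M (pres p) n1"
        "typed T2 (lift 0 s) \<rho> m"
      by auto
    from typed_liftD[OF T(3)] have T2: "T2 0 = {#}" "typed (env_del 0 T2) s \<rho> m" by auto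
    have "T1 0 = parg p" using T(1) T2(1) by (metis add.right_neutral env_ins_same plus_fun_apply)
    then have "T1 = env_ins 0 (parg p) (env_del 0 T1)" by (simp add: env_ins_del)
    with T(2) have "typed (env_ins 0 (parg p) (env_ins k \<rho> (env_del 0 T1))) M (pres p) n1"
      by (metis env_ins_commute)
    moreover have "penv p = env_del 0 T1 + env_del 0 T2" using T(1) by (metis env_del_add env_del_ins)
    ultimately show "\<exists>G1 D \<rho> n1 m. penv p = G1 + D \<and>
        typed (env_ins 0 (parg p) (env_ins k \<rho> G1)) M (pres p) n1 \<and> typed D s \<rho> m"
      using T2(2) by blast
  qed
  from typed_Lam_substD_premises[OF Lam.prems(2) this] show ?case using P by auto
next
  case (App M1 M2)
  from App.prems(1) obtain G1 G2 a n1 n2 where A: "G = G1 + G2"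
    "typed G1 (subst M1 k s) {#Arr a t#} n1" "typed G2 (subst M2 k s) a n2"
    by (auto elim: typed_AppE)
  from App.IH(1)[OF A(2) App.prems(2)] obtain H1 D1 s1 x1 y1 where
    1: "G1 = H1 + D1" "typed (env_ins k s1 H1) M1 {#Arr a t#} x1" "typed D1 s s1 y1" by auto
  from App.IH(2)[OF A(3) App.prems(2)] obtain H2 D2 s2 x2 y2 where
    2: "G2 = H2 + D2" "typed (env_ins k s2 H2) M2 a x2" "typed D2 s s2 y2" by auto
  from T_App[OF 1(2) 2(2)] typed_value_add[OF App.prems(2) 1(3) 2(3)] show ?case
    using A(1) 1(1) 2(1)
    by (intro exI[of _ "H1 + H2"] exI[of _ "D1 + D2"] exI[of _ "s1 + s2"]) (auto simp: env_ins_add add_ac)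
qed

lemma typed_beta_reduct:
  "typed G (App (Lam M) V) t n \<Longrightarrow> is_value V \<Longrightarrow> \<exists>n'<n. typed G (subst M 0 V) t n'"
  by (elim typed_AppE) (metis add_less_mono1 typed_Lam_singleD lessI typed_subst)

lemma typed_beta_expand:
  "typed G (subst M 0 V) t n \<Longrightarrow> is_value V \<Longrightarrow> \<exists>n'. typed G (App (Lam M) V) t n'"
  by (drule typed_substD) (auto intro: T_App typed_Lam_single)

section \<open>Typings: invariance under reduction and adequacy\<close>

lemma typed_sigma1_iff:
  "typed G (App (App (Lam M) N) P) t n \<longleftrightarrow> typed G (App (Lam (App M (lift 0 P))) N) t n"
proof
  assume "typed G (App (App (Lam M) N) P) t n"
  then obtain Gl Gn Gp a r nl nn np where A: "G = Gl + Gn + Gp" "n = Suc (Suc (nl + nn) + np)"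
    "typed Gl (Lam M) {#Arr a {#Arr r t#}#} nl" "typed Gn N a nn" "typed Gp P r np"
    by (auto elim!: typed_AppE)
  from T_App[OF typed_Lam_singleD[OF A(3)] typed_lift[OF A(5), of 0]]
  have "typed (env_ins 0 a (Gl + Gp)) (App M (lift 0 P)) t (Suc (nl + np))"
    by (simp add: env_ins_add[symmetric])
  from T_App[OF typed_Lam_single[OF this] A(4)]
  show "typed G (App (Lam (App M (lift 0 P))) N) t n" using A(1,2) by (simp add: add_ac)
next
  assume "typed G (App (Lam (App M (lift 0 P))) N) t n"
  then obtain Gl Gn a nl nn where A: "G = Gl + Gn" "n = Suc (nl + nn)"
    "typed Gl (Lam (App M (lift 0 P))) {#Arr a t#} nl" "typed Gn N a nn"
    by (auto elim: typed_AppE)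
  from typed_Lam_singleD[OF A(3)] obtain T1 T2 r x y where B: "env_ins 0 a Gl = T1 + T2"
    "typed T1 M {#Arr r t#} x" "typed T2 (lift 0 P) r y" "nl = Suc (x + y)"
    by (auto elim: typed_AppE)
  from typed_liftD[OF B(3)] have T2: "T2 0 = {#}" "typed (env_del 0 T2) P r y" by auto
  have "T1 0 = a" using B(1) T2(1) by (metis add.right_neutral env_ins_same plus_fun_apply)
  then have "typed (env_ins 0 a (env_del 0 T1)) M {#Arr r t#} x" using B(2) by (simp add: env_ins_del)
  from T_App[OF T_App[OF typed_Lam_single[OF this] A(4)] T2(2)]
  have "typed (env_del 0 T1 + Gn + env_del 0 T2) (App (App (Lam M) N) P) t (Suc (Suc (x + nn) + y))" .
  moreover have "Gl = env_del 0 T1 + env_del 0 T2" using B(1) by (metis env_del_add env_del_ins)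
  ultimately show "typed G (App (App (Lam M) N) P) t n" using A(1,2) B(4) by (simp add: add_ac)
qed

lemma typed_sigma3_iff:
  "typed G (App V (App (Lam M) N)) t n \<longleftrightarrow> typed G (App (Lam (App (lift 0 V) M)) N) t n"
proof
  assume "typed G (App V (App (Lam M) N)) t n"
  then obtain Gv Gl Gn a r nv nl nn where A: "G = Gv + (Gl + Gn)" "n = Suc (nv + Suc (nl + nn))"
    "typed Gv V {#Arr r t#} nv" "typed Gl (Lam M) {#Arr a r#} nl" "typed Gn N a nn"
    by (auto elim!: typed_AppE)
  from T_App[OF typed_lift[OF A(3), of 0] typed_Lam_singleD[OF A(4)]]
  have "typed (env_ins 0 a (Gv + Gl)) (App (lift 0 V) M) t (Suc (nv + nl))"
    by (simp add: env_ins_add[symmetric])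
  from T_App[OF typed_Lam_single[OF this] A(5)]
  show "typed G (App (Lam (App (lift 0 V) M)) N) t n" using A(1,2) by (simp add: add_ac)
next
  assume "typed G (App (Lam (App (lift 0 V) M)) N) t n"
  then obtain Gl Gn a nl nn where A: "G = Gl + Gn" "n = Suc (nl + nn)"
    "typed Gl (Lam (App (lift 0 V) M)) {#Arr a t#} nl" "typed Gn N a nn"
    by (auto elim: typed_AppE)
  from typed_Lam_singleD[OF A(3)] obtain T1 T2 r x y where B: "env_ins 0 a Gl = T1 + T2"
    "typed T1 (lift 0 V) {#Arr r t#} x" "typed T2 M r y" "nl = Suc (x + y)"
    by (auto elim: typed_AppE)
  from typed_liftD[OF B(2)] have T1: "T1 0 = {#}" "typed (env_del 0 T1) V {#Arr r t#} x" by auto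
  have "T2 0 = a" using B(1) T1(1) by (metis add_0 env_ins_same plus_fun_apply)
  then have "typed (env_ins 0 a (env_del 0 T2)) M r y" using B(3) by (simp add: env_ins_del)
  from T_App[OF T1(2) T_App[OF typed_Lam_single[OF this] A(4)]]
  have "typed (env_del 0 T1 + (env_del 0 T2 + Gn)) (App V (App (Lam M) N)) t (Suc (x + Suc (y + nn)))" .
  moreover have "Gl = env_del 0 T1 + env_del 0 T2" using B(1) by (metis env_del_add env_del_ins)
  ultimately show "typed G (App V (App (Lam M) N)) t n" using A(1,2) B(4) by (simp add: add_ac)
qed

definition typings :: "trm \<Rightarrow> (env \<times> mtype) set" where
  "typings M = {(G, t). \<exists>n. typed G M t n}"

lemma typings_LamI:
  assumes "\<forall>p. p \<in># P \<longrightarrow> (env_ins 0 (parg p) (penv p), pres p) \<in> typings M"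
  shows "((\<Sum>p\<in>#P. penv p), image_mset arrow P) \<in> typings (Lam M)"
proof -
  have "\<forall>p. \<exists>n. p \<in># P \<longrightarrow> typed (env_ins 0 (parg p) (penv p)) M (pres p) n"
    using assms unfolding typings_def by blast
  then obtain f where "\<forall>p. p \<in># P \<longrightarrow> typed (env_ins 0 (parg p) (penv p)) M (pres p) (f p)"
    by metis
  then have "\<forall>p. p \<in># image_mset (\<lambda>p. Premise (parg p) (penv p) (pres p) (f p)) P \<longrightarrow>
      typed (env_ins 0 (parg p) (penv p)) M (pres p) (psize p)"
    by auto
  from T_Lam[OF this] show ?thesis
    by (auto simp: typings_def image_mset.compositionality comp_def arrow_eta)
qed

lemma typings_Lam_mono:
  assumes "typings M \<subseteq> typings N"
  shows "typings (Lam M) \<subseteq> typings (Lam N)"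
proof clarify
  fix G t assume "(G, t) \<in> typings (Lam M)"
  then obtain P where P: "\<forall>p. p \<in># P \<longrightarrow> typed (env_ins 0 (parg p) (penv p)) M (pres p) (psize p)"
    "G = (\<Sum>p\<in>#P. penv p)" "t = image_mset arrow P"
    by (auto simp: typings_def elim: typed_LamE)
  have "\<forall>p. p \<in># P \<longrightarrow> (env_ins 0 (parg p) (penv p), pres p) \<in> typings N"
    using P(1) assms unfolding typings_def by blast
  with P(2,3) show "(G, t) \<in> typings (Lam N)" using typings_LamI by simp
qed

lemma typings_App_mono:
  assumes "typings M \<subseteq> typings M'" and "typings N \<subseteq> typings N'"
  shows "typings (App M N) \<subseteq> typings (App M' N')"
  using assms unfolding typings_def by (blast elim: typed_AppE intro: T_App)

lemma typings_plug_mono: "typings M \<subseteq> typings N \<Longrightarrow> typings (plug C M) \<subseteq> typings (plug C N)"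
  by (induction C) (simp_all add: typings_Lam_mono typings_App_mono)

lemma typings_v_rule: "v_rule M N \<Longrightarrow> typings N \<subseteq> typings M"
  unfolding typings_def
  by (induction rule: v_rule.induct) (auto intro: typed_beta_expand simp: typed_sigma1_iff typed_sigma3_iff)

lemma typings_step_v: "step_v M N \<Longrightarrow> typings N \<subseteq> typings M"
  unfolding step_v_def
  by (induction rule: ctx_closure.induct) (simp_all add: typings_v_rule typings_Lam_mono typings_App_mono)

lemma typings_red_v: "red_v M N \<Longrightarrow> typings N \<subseteq> typings M"
  by (induction rule: rtranclp_induct) (use typings_step_v in blast)+

lemma step_beta_v_imp_step_v: "step_beta_v M N \<Longrightarrow> step_v M N"
  unfolding step_beta_v_def step_v_def
  by (induction rule: ctx_closure.induct)
     (auto intro: ctx_closure.intros v_rule.intros elim: beta_v_rule.cases)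

lemma red_beta_v_imp_red_v: "red_beta_v M N \<Longrightarrow> red_v M N"
  by (induction rule: rtranclp_induct) (auto intro: step_beta_v_imp_step_v rtranclp.rtrancl_into_rtrancl)

lemma typed_empty_env_step:
  "typed 0 P t n \<Longrightarrow> \<not> is_value P \<Longrightarrow> \<exists>P' n'. step_beta_v P P' \<and> typed 0 P' t n' \<and> n' < n"
proof (induction P arbitrary: t n)
  case (App M N)
  from App.prems(1) obtain a n1 n2 where A: "typed 0 M {#Arr a t#} n1" "typed 0 N a n2" "n = Suc (n1 + n2)"
    by (auto elim: typed_AppE simp: env_add_eq_0_iff)
  show ?case
  proof (cases "is_value M")
    case False
    from App.IH(1)[OF A(1) False] obtain M' n' where "step_beta_v M M'" "typed 0 M' {#Arr a t#} n'" "n' < n1"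
      by auto
    then show ?thesis using T_App[of 0 M' a t n' 0 N n2] A
      by (intro exI[of _ "App M' N"] exI[of _ "Suc (n' + n2)"]) (auto simp: step_beta_v_def intro: ctx_closure.intros)
  next
    case vM: True
    show ?thesis
    proof (cases "is_value N")
      case False
      from App.IH(2)[OF A(2) False] obtain N' n' where "step_beta_v N N'" "typed 0 N' a n'" "n' < n2"
        by auto
      then show ?thesis using T_App[of 0 M a t n1 0 N' n'] A
        by (intro exI[of _ "App M N'"] exI[of _ "Suc (n1 + n')"]) (auto simp: step_beta_v_def intro: ctx_closure.intros)
    next
      case vN: True
      show ?thesis
      proof (cases M)
        case (Var x)
        \<comment> \<open>a free head variable would need a non-empty environment\<close>
        then show ?thesis using A(1) by (auto elim!: typed_VarE dest!: fun_cong[where x = x])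
      next
        case (Lam M')
        with A vN obtain n' where "n' < n" "typed 0 (subst M' 0 N) t n'"
          using typed_beta_reduct T_App[OF A(1,2)] by fastforce
        moreover have "step_beta_v (App (Lam M') N) (subst M' 0 N)"
          using vN by (auto simp: step_beta_v_def intro!: ctx_closure.root beta_v_rule.intros)
        ultimately show ?thesis using Lam by blast
      qed (use vM in simp)
    qed
  qed
qed auto

lemma converges_iff_empty_typing:
  "(\<exists>V. is_value V \<and> red_beta_v P V) \<longleftrightarrow> (0, {#}) \<in> typings P"
proof
  assume "\<exists>V. is_value V \<and> red_beta_v P V"
  then show "(0, {#}) \<in> typings P"
    using typings_red_v[OF red_beta_v_imp_red_v] typed_value_empty unfolding typings_def by blast
next
  assume "(0, {#}) \<in> typings P"
  then obtain n where "typed 0 P {#} n" unfolding typings_def by blast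
  then show "\<exists>V. is_value V \<and> red_beta_v P V"
  proof (induction n arbitrary: P rule: less_induct)
    case (less n)
    show ?case
    proof (cases "is_value P")
      case False
      with typed_empty_env_step[OF less.prems] obtain P' n' where
        "step_beta_v P P'" "typed 0 P' {#} n'" "n' < n" by blast
      with less.IH show ?thesis by (meson converse_rtranclp_into_rtranclp)
    qed blast
  qed
qed

lemma obs_equiv_if_typings_eq:
  assumes "typings M = typings N"
  shows "obs_equiv M N"
proof -
  have "typings (plug C M) = typings (plug C N)" for C
    using assms typings_plug_mono by blast
  then show ?thesis unfolding obs_equiv_def converges_iff_empty_typing by simp
qed

section \<open>Approximants forcing a typing\<close>

text \<open>\<open>below\<close> has a transitivity rule and so cannot be inverted directly; \<open>le_btrm\<close> is a
  structural order containing it.\<close>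
fun le_btrm :: "btrm \<Rightarrow> btrm \<Rightarrow> bool" where
  "le_btrm Bot B = (case B of BApp _ _ \<Rightarrow> False | _ \<Rightarrow> True)"
| "le_btrm (BVar x) B = (B = BVar x)"
| "le_btrm (BLam A) B = (case B of BLam B' \<Rightarrow> le_btrm A B' | _ \<Rightarrow> False)"
| "le_btrm (BApp A1 A2) B = (case B of BApp B1 B2 \<Rightarrow> le_btrm A1 B1 \<and> le_btrm A2 B2 | _ \<Rightarrow> False)"

lemma le_btrm_refl: "le_btrm A A"
  by (induction A) auto

lemma le_btrm_trans: "le_btrm A B \<Longrightarrow> le_btrm B C \<Longrightarrow> le_btrm A C"
proof (induction A arbitrary: B C)
  case Bot then show ?case by (cases B; cases C) auto
qed (auto split: btrm.splits)

lemma below_imp_le_btrm: "below A B \<Longrightarrow> le_btrm A B"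
  by (induction rule: below.induct) (auto intro: le_btrm_refl le_btrm_trans split: btrm.splits)

definition forces :: "btrm \<Rightarrow> env \<Rightarrow> mtype \<Rightarrow> bool" where
  "forces A G t \<longleftrightarrow> (\<forall>N. le_btrm A (embed N) \<longrightarrow> (G, t) \<in> typings N)"

lemma forces_Bot_empty: "forces Bot G t \<Longrightarrow> t = {#}"
proof -
  assume "forces Bot G t"
  then have "(G, t) \<in> typings (Var 0)" "(G, t) \<in> typings (Var 1)"
    unfolding forces_def by auto
  then have "G = 0(0 := t)" "G = 0(1 := t)"
    unfolding typings_def by (auto elim: typed_VarE)
  then show ?thesis by (metis fun_upd_other fun_upd_same zero_fun_apply zero_neq_one)
qed

lemma forces_Bot: "forces Bot 0 {#}"
  unfolding forces_def typings_def
proof (intro allI impI)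
  fix N assume "le_btrm Bot (embed N)"
  then have "is_value N" by (cases N) auto
  then show "(0, {#}) \<in> {(G, t). \<exists>n. typed G N t n}" using typed_value_empty by blast
qed

lemma forces_BVar: "forces (BVar x) (0(x := t)) t"
proof -
  have "le_btrm (BVar x) (embed N) \<Longrightarrow> N = Var x" for N by (cases N) auto
  then show ?thesis unfolding forces_def typings_def using T_Var by blast
qed

lemma forces_BLam:
  assumes "\<forall>p. p \<in># P \<longrightarrow> forces A (env_ins 0 (parg p) (penv p)) (pres p)"
  shows "forces (BLam A) (\<Sum>p\<in>#P. penv p) (image_mset arrow P)"
  unfolding forces_def
proof (intro allI impI)
  fix N assume "le_btrm (BLam A) (embed N)"
  then obtain N' where "N = Lam N'" "le_btrm A (embed N')" by (cases N) auto
  with assms show "((\<Sum>p\<in>#P. penv p), image_mset arrow P) \<in> typings N"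
    unfolding forces_def by (auto intro: typings_LamI)
qed

lemma forces_BApp: "forces A1 G1 {#Arr s t#} \<Longrightarrow> forces A2 G2 s \<Longrightarrow> forces (BApp A1 A2) (G1 + G2) t"
  unfolding forces_def typings_def
proof (intro allI impI)
  fix N assume F: "\<forall>N. le_btrm A1 (embed N) \<longrightarrow> (G1, {#Arr s t#}) \<in> {(G, t). \<exists>n. typed G N t n}"
    "\<forall>N. le_btrm A2 (embed N) \<longrightarrow> (G2, s) \<in> {(G, t). \<exists>n. typed G N t n}"
    and "le_btrm (BApp A1 A2) (embed N)"
  then obtain N1 N2 where "N = App N1 N2" "le_btrm A1 (embed N1)" "le_btrm A2 (embed N2)"
    by (cases N) auto
  with F show "(G1 + G2, t) \<in> {(G, t). \<exists>n. typed G N t n}" using T_App by blast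
qed

inductive_cases apxA_BLamE: "apxA (BLam A)"
inductive_cases apxB_BLamE: "apxB (BLam A)"
inductive_cases apxH_BLamE: "apxH (BLam A)"
inductive_cases apxA_BAppE: "apxA (BApp A1 A2)"
inductive_cases apxB_BAppE: "apxB (BApp A1 A2)"

lemma apxA_le_Lam:
  "apxA A \<Longrightarrow> le_btrm A (embed (Lam M)) \<Longrightarrow> A = Bot \<or> (\<exists>A'. A = BLam A' \<and> apxA A')"
  by (cases A) (auto elim: apxA_BLamE apxB_BLamE apxH_BLamE)

lemma apxB_if_le_value: "is_value M \<Longrightarrow> apxA A \<Longrightarrow> le_btrm A (embed M) \<Longrightarrow> apxB A"
  by (cases M; cases A) (auto intro: apxA_apxB_apxH.intros elim: apxA_BLamE apxB_BLamE apxH_BLamE)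

lemma apxH_if_le_App:
  assumes "apxA A" "le_btrm A (embed (App M1 M2))" "\<forall>P. M1 \<noteq> Lam P"
  shows "apxH A"
proof -
  obtain A1 A2 where A: "A = BApp A1 A2" "le_btrm A1 (embed M1)"
    using assms(2) by (cases A) simp_all
  show ?thesis unfolding A(1) using assms(1,3) A by (cases M1) (auto elim: apxA_BAppE apxB_BAppE)
qed

lemma apxA_BApp_if_not_v_redex:
  assumes apx1: "apxA A1" "le_btrm A1 (embed M1)" "A1 \<noteq> Bot"
    and apx2: "apxA A2" "le_btrm A2 (embed M2)"
    and no_redex: "\<nexists>M'. v_rule (App M1 M2) M'"
  shows "apxA (BApp A1 A2)"
proof -
  have no_sigma3: "\<forall>P R. M2 \<noteq> App (Lam P) R" if "is_value M1"
    using no_redex that v_rule.sigma3 by blast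
  have apxH2: "apxH A2" if "\<not> is_value M2" "\<forall>P R. M2 \<noteq> App (Lam P) R"
    using that apx2 by (cases M2) (auto intro: apxH_if_le_App)
  show ?thesis
  proof (cases M1)
    case (Var x)
    from apx1(2,3) Var have "A1 = BVar x" by (cases A1) auto
    moreover have "apxB A2"
      using apx2 apxH2 no_sigma3 Var by (cases "is_value M2") (auto intro: apxB_if_le_value B_head)
    ultimately show ?thesis by (auto intro: A_B B_head H_base)
  next
    case (Lam P)
    with apx1 obtain A' where "A1 = BLam A'" "apxA A'" using apxA_le_Lam by blast
    moreover have "\<not> is_value M2" using no_redex Lam v_rule.beta_v by blast
    ultimately show ?thesis using apxH2 no_sigma3 Lam by (auto intro: A_C)
  next
    case (App M11 M12)
    have "\<forall>P. M11 \<noteq> Lam P" using no_redex App v_rule.sigma1 by blast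
    with apx1 App have "apxH A1" using apxH_if_le_App by blast
    then show ?thesis using apx2(1) by (auto intro: A_B B_head H_app)
  qed
qed

section \<open>Reduction along a typing derivation\<close>

text \<open>The typing of a term is invariant under \<open>\<sigma>\<close>-steps, so termination of the reduction
  below needs a second measure on terms; this multiplicative size strictly decreases along \<open>\<sigma>\<close>-steps.\<close>
fun msize :: "trm \<Rightarrow> nat" where
  "msize (Var x) = 2"
| "msize (Lam M) = Suc (msize M)"
| "msize (App M N) = msize M * msize N"

lemma msize_ge_2: "2 \<le> msize M"
proof (induction M)
  case (App M N)
  then show ?case using mult_le_mono[OF App.IH] by simp
qed auto

lemma msize_lift [simp]: "msize (lift k M) = msize M"
  by (induction M arbitrary: k) auto

lemma msize_sigma1: "msize (App (Lam (App M (lift 0 P))) N) < msize (App (App (Lam M) N) P)"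
proof -
  have "msize N * 1 < msize N * msize P" using msize_ge_2[of N] msize_ge_2[of P] by simp
  then show ?thesis by (simp add: algebra_simps)
qed

lemma msize_sigma3: "msize (App (Lam (App (lift 0 V) M)) N) < msize (App V (App (Lam M) N))"
proof -
  have "msize N * 1 < msize N * msize V" using msize_ge_2[of N] msize_ge_2[of V] by simp
  then show ?thesis by (simp add: algebra_simps)
qed

lemma sum_mset_strict_mono:
  fixes f g :: "'a \<Rightarrow> 'b::ordered_cancel_comm_monoid_add"
  assumes "Q \<noteq> {#}" and "\<And>q. q \<in># Q \<Longrightarrow> f q < g q"
  shows "(\<Sum>q\<in>#Q. f q) < (\<Sum>q\<in>#Q. g q)"
  using assms
proof (induction Q)
  case (add x Q)
  then show ?case
    by (cases "Q = {#}") (auto intro: add_less_le_mono sum_mset_mono less_imp_le)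
qed simp

lemma sum_mset_Union_image:
  "(\<Sum>x\<in>#(\<Sum>q\<in>#Q. F q). f x) = (\<Sum>q\<in>#Q. \<Sum>x\<in>#F q. f x)"
  by (induction Q) auto

text \<open>Reduction has to make progress for all premises of a \<open>\<lambda>\<close>-rule at once, since reducts chosen
  for different premises could not be merged without confluence; hence the approximation argument
  works with multisets of judgements.\<close>
datatype jdg = Jdg (jenv: env) (jtype: mtype) (jsize: nat)

definition typed_all :: "jdg multiset \<Rightarrow> trm \<Rightarrow> bool" where
  "typed_all Q M \<longleftrightarrow> (\<forall>q. q \<in># Q \<longrightarrow> typed (jenv q) M (jtype q) (jsize q))"

definition total_size :: "jdg multiset \<Rightarrow> nat" where
  "total_size Q = (\<Sum>q\<in>#Q. jsize q)"

definition approximated :: "jdg multiset \<Rightarrow> trm \<Rightarrow> bool" where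
  "approximated Q M \<longleftrightarrow>
     (\<exists>A. apxA A \<and> below A (embed M) \<and> (\<forall>q. q \<in># Q \<longrightarrow> forces A (jenv q) (jtype q)))"

text \<open>Pairs are ordered lexicographically (\<open>Product_Lexorder\<close>).\<close>
definition progresses :: "jdg multiset \<Rightarrow> trm \<Rightarrow> bool" where
  "progresses Q M \<longleftrightarrow> (\<exists>M' f. step_v M M' \<and> (\<forall>q. q \<in># Q \<longrightarrow> typed (jenv q) M' (jtype q) (f q)) \<and>
     ((\<Sum>q\<in>#Q. f q), msize M') < (total_size Q, msize M))"

lemma progresses_v_rule:
  assumes step: "v_rule M M'" and typed: "typed_all Q M" and "Q \<noteq> {#}"
  shows "progresses Q M"
proof -
  have step_v: "step_v M M'" using step unfolding step_v_def by (rule ctx_closure.root)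
  have keep_sizes: "progresses Q M" if "typed_all Q M'" "msize M' < msize M"
    using that step_v unfolding progresses_def typed_all_def total_size_def
    by (intro exI[of _ M'] exI[of _ jsize]) simp
  from step show ?thesis
  proof cases
    case (beta_v V P)
    have "\<forall>q. \<exists>n. q \<in># Q \<longrightarrow> typed (jenv q) M' (jtype q) n \<and> n < jsize q"
      using typed typed_beta_reduct beta_v unfolding typed_all_def by blast
    then obtain f where f: "\<forall>q. q \<in># Q \<longrightarrow> typed (jenv q) M' (jtype q) (f q) \<and> f q < jsize q"
      by metis
    then have "(\<Sum>q\<in>#Q. f q) < total_size Q"
      unfolding total_size_def using sum_mset_strict_mono[OF \<open>Q \<noteq> {#}\<close>] by blast
    then show ?thesis unfolding progresses_def using step_v f by (intro exI[of _ M'] exI[of _ f]) simp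
  next
    case sigma1
    then show ?thesis using typed msize_sigma1 keep_sizes
      unfolding typed_all_def by (simp add: typed_sigma1_iff)
  next
    case sigma3
    then show ?thesis using typed msize_sigma3 keep_sizes
      unfolding typed_all_def by (simp add: typed_sigma3_iff)
  qed
qed

definition prem_jdg :: "premise \<Rightarrow> jdg" where
  "prem_jdg p = Jdg (env_ins 0 (parg p) (penv p)) (pres p) (psize p)"

definition lam_jdg :: "premise multiset \<Rightarrow> jdg" where
  "lam_jdg P = Jdg (\<Sum>p\<in>#P. penv p) (image_mset arrow P) (\<Sum>p\<in>#P. psize p)"

lemma typed_all_LamE:
  assumes "typed_all Q (Lam M)"
  obtains Pf where "\<forall>q. q \<in># Q \<longrightarrow> q = lam_jdg (Pf q)"
    and "typed_all (\<Sum>q\<in>#Q. image_mset prem_jdg (Pf q)) M"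
proof -
  have "\<forall>q. \<exists>P. q \<in># Q \<longrightarrow> q = lam_jdg P \<and>
      (\<forall>p. p \<in># P \<longrightarrow> typed (env_ins 0 (parg p) (penv p)) M (pres p) (psize p))"
  proof
    fix q
    show "\<exists>P. q \<in># Q \<longrightarrow> q = lam_jdg P \<and>
      (\<forall>p. p \<in># P \<longrightarrow> typed (env_ins 0 (parg p) (penv p)) M (pres p) (psize p))"
    proof (cases "q \<in># Q")
      case True
      then have "typed (jenv q) (Lam M) (jtype q) (jsize q)" using assms unfolding typed_all_def by blast
      then show ?thesis by (elim typed_LamE) (metis jdg.collapse lam_jdg_def)
    qed blast
  qed
  then obtain Pf where "\<forall>q. q \<in># Q \<longrightarrow> q = lam_jdg (Pf q) \<and>
      (\<forall>p. p \<in># Pf q \<longrightarrow> typed (env_ins 0 (parg p) (penv p)) M (pres p) (psize p))"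
    by metis
  then show thesis by (intro that[of Pf]) (auto simp: typed_all_def prem_jdg_def)
qed

lemma approximated_Lam_no_premises:
  assumes "\<forall>q. q \<in># Q \<longrightarrow> q = lam_jdg (Pf q)" and "\<forall>q. q \<in># Q \<longrightarrow> Pf q = {#}"
  shows "approximated Q (Lam M)"
proof -
  have "apxA Bot" "below Bot (embed (Lam M))" by (auto intro: A_B B_bot below.bot_lam)
  moreover have "forces Bot (jenv q) (jtype q)" if "q \<in># Q" for q
  proof -
    have "q = Jdg 0 {#} 0" using assms that by (simp add: lam_jdg_def)
    then show ?thesis using forces_Bot by simp
  qed
  ultimately show ?thesis unfolding approximated_def by blast
qed

lemma approximated_Lam:
  assumes Q: "\<forall>q. q \<in># Q \<longrightarrow> q = lam_jdg (Pf q)"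
    and "approximated (\<Sum>q\<in>#Q. image_mset prem_jdg (Pf q)) M"
  shows "approximated Q (Lam M)"
proof -
  from assms(2) obtain A where A: "apxA A" "below A (embed M)"
    and forces_prem: "\<forall>b. b \<in># (\<Sum>q\<in>#Q. image_mset prem_jdg (Pf q)) \<longrightarrow> forces A (jenv b) (jtype b)"
    unfolding approximated_def by blast
  have forces: "\<forall>q p. q \<in># Q \<longrightarrow> p \<in># Pf q \<longrightarrow> forces A (env_ins 0 (parg p) (penv p)) (pres p)"
  proof (intro allI impI)
    fix q p assume "q \<in># Q" "p \<in># Pf q"
    then have "prem_jdg p \<in># (\<Sum>q\<in>#Q. image_mset prem_jdg (Pf q))" by auto
    from forces_prem[rule_format, OF this] show "forces A (env_ins 0 (parg p) (penv p)) (pres p)"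
      by (simp add: prem_jdg_def)
  qed
  have "forces (BLam A) (jenv q) (jtype q)" if "q \<in># Q" for q
    using forces_BLam[of "Pf q" A] forces Q that by (simp add: lam_jdg_def) (metis jdg.sel(1,2))
  moreover have "apxA (BLam A)" "below (BLam A) (embed (Lam M))"
    using A by (auto intro: A_B B_lam below.lam)
  ultimately show ?thesis unfolding approximated_def by blast
qed

lemma progresses_Lam:
  assumes Q: "\<forall>q. q \<in># Q \<longrightarrow> q = lam_jdg (Pf q)"
    and "progresses (\<Sum>q\<in>#Q. image_mset prem_jdg (Pf q)) M"
  shows "progresses Q (Lam M)"
proof -
  let ?Qb = "\<Sum>q\<in>#Q. image_mset prem_jdg (Pf q)"
  from assms(2) obtain M' f where M': "step_v M M'"
    and f: "\<forall>b. b \<in># ?Qb \<longrightarrow> typed (jenv b) M' (jtype b) (f b)"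
    and less: "((\<Sum>b\<in>#?Qb. f b), msize M') < (total_size ?Qb, msize M)"
    unfolding progresses_def by blast
  define g where "g q = (\<Sum>p\<in>#Pf q. f (prem_jdg p))" for q
  have "typed (jenv q) (Lam M') (jtype q) (g q)" if q: "q \<in># Q" for q
  proof -
    let ?P = "image_mset (\<lambda>p. Premise (parg p) (penv p) (pres p) (f (prem_jdg p))) (Pf q)"
    have "\<forall>p. p \<in># ?P \<longrightarrow> typed (env_ins 0 (parg p) (penv p)) M' (pres p) (psize p)"
      using f q by (force simp: prem_jdg_def)
    from T_Lam[OF this] have "typed (jenv (lam_jdg (Pf q))) (Lam M') (jtype (lam_jdg (Pf q))) (g q)"
      by (simp add: lam_jdg_def g_def image_mset.compositionality comp_def arrow_eta)
    with Q q show ?thesis by metis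
  qed
  moreover have "(\<Sum>q\<in>#Q. g q) = (\<Sum>b\<in>#?Qb. f b)"
    by (simp add: g_def sum_mset_Union_image image_mset.compositionality comp_def)
  moreover have "total_size ?Qb = total_size Q"
  proof -
    have "total_size ?Qb = (\<Sum>q\<in>#Q. jsize (lam_jdg (Pf q)))"
      by (simp add: total_size_def sum_mset_Union_image image_mset.compositionality comp_def
          prem_jdg_def lam_jdg_def)
    also have "\<dots> = total_size Q"
      unfolding total_size_def using Q by (metis (no_types, lifting) image_mset_cong)
    finally show ?thesis .
  qed
  moreover have "step_v (Lam M) (Lam M')" using M' unfolding step_v_def by (rule ctx_closure.lam)
  ultimately show ?thesis unfolding progresses_def using less by (intro exI[of _ "Lam M'"] exI[of _ g]) auto
qed

definition app_split :: "jdg \<Rightarrow> jdg \<Rightarrow> jdg \<Rightarrow> bool" where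
  "app_split q q1 q2 \<longleftrightarrow> jenv q = jenv q1 + jenv q2 \<and> jtype q1 = {#Arr (jtype q2) (jtype q)#} \<and>
     jsize q = Suc (jsize q1 + jsize q2)"

lemma typed_all_AppE:
  assumes "typed_all Q (App M1 M2)"
  obtains L R where "\<forall>q. q \<in># Q \<longrightarrow> app_split q (L q) (R q)"
    and "typed_all (image_mset L Q) M1" and "typed_all (image_mset R Q) M2"
proof -
  have "\<forall>q. \<exists>q1 q2. q \<in># Q \<longrightarrow> app_split q q1 q2 \<and>
      typed (jenv q1) M1 (jtype q1) (jsize q1) \<and> typed (jenv q2) M2 (jtype q2) (jsize q2)"
  proof
    fix q
    show "\<exists>q1 q2. q \<in># Q \<longrightarrow> app_split q q1 q2 \<and>
      typed (jenv q1) M1 (jtype q1) (jsize q1) \<and> typed (jenv q2) M2 (jtype q2) (jsize q2)"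
    proof (cases "q \<in># Q")
      case True
      then have "typed (jenv q) (App M1 M2) (jtype q) (jsize q)"
        using assms unfolding typed_all_def by blast
      then obtain G1 G2 s n1 n2 where "jenv q = G1 + G2" "typed G1 M1 {#Arr s (jtype q)#} n1"
        "typed G2 M2 s n2" "jsize q = Suc (n1 + n2)"
        by (auto elim: typed_AppE)
      then show ?thesis
        by (intro exI[of _ "Jdg G1 {#Arr s (jtype q)#} n1"] exI[of _ "Jdg G2 s n2"])
          (simp add: app_split_def)
    qed blast
  qed
  then obtain L R where "\<forall>q. q \<in># Q \<longrightarrow> app_split q (L q) (R q) \<and>
      typed (jenv (L q)) M1 (jtype (L q)) (jsize (L q)) \<and> typed (jenv (R q)) M2 (jtype (R q)) (jsize (R q))"
    by metis
  with that show thesis unfolding typed_all_def by auto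
qed

lemma total_size_app_split:
  assumes "\<forall>q. q \<in># Q \<longrightarrow> app_split q (L q) (R q)"
  shows "total_size Q = total_size (image_mset L Q) + total_size (image_mset R Q) + size Q"
proof -
  have "total_size Q = (\<Sum>q\<in>#Q. Suc (jsize (L q) + jsize (R q)))"
    unfolding total_size_def using assms by (simp add: app_split_def cong: image_mset_cong)
  also have "\<dots> = total_size (image_mset L Q) + total_size (image_mset R Q) + size Q"
    unfolding total_size_def by (induction Q) auto
  finally show ?thesis .
qed

lemma progresses_AppL:
  assumes split: "\<forall>q. q \<in># Q \<longrightarrow> app_split q (L q) (R q)"
    and typed2: "typed_all (image_mset R Q) M2"
    and "progresses (image_mset L Q) M1"
  shows "progresses Q (App M1 M2)"
proof -
  from assms(3) obtain M' f where M': "step_v M1 M'"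
    and f: "\<forall>q. q \<in># Q \<longrightarrow> typed (jenv (L q)) M' (jtype (L q)) (f (L q))"
    and less: "((\<Sum>q\<in>#Q. f (L q)), msize M') < (total_size (image_mset L Q), msize M1)"
    unfolding progresses_def by (auto simp: image_mset.compositionality comp_def)
  define g where "g q = Suc (f (L q) + jsize (R q))" for q
  have "typed (jenv q) (App M' M2) (jtype q) (g q)" if "q \<in># Q" for q
  proof -
    have "typed (jenv (R q)) M2 (jtype (R q)) (jsize (R q))"
      using typed2 that unfolding typed_all_def by simp
    from T_App[OF _ this, of "jenv (L q)" M' "jtype q" "f (L q)"] show ?thesis
      using f split that by (simp add: app_split_def g_def)
  qed
  moreover have "(\<Sum>q\<in>#Q. g q) = (\<Sum>q\<in>#Q. f (L q)) + total_size (image_mset R Q) + size Q"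
    unfolding g_def total_size_def by (induction Q) auto
  moreover have "step_v (App M1 M2) (App M' M2)" using M' unfolding step_v_def by (rule ctx_closure.appL)
  ultimately show ?thesis
    unfolding progresses_def total_size_app_split[OF split]
    using less msize_ge_2[of M2] by (intro exI[of _ "App M' M2"] exI[of _ g]) auto
qed

lemma progresses_AppR:
  assumes split: "\<forall>q. q \<in># Q \<longrightarrow> app_split q (L q) (R q)"
    and typed1: "typed_all (image_mset L Q) M1"
    and "progresses (image_mset R Q) M2"
  shows "progresses Q (App M1 M2)"
proof -
  from assms(3) obtain M' f where M': "step_v M2 M'"
    and f: "\<forall>q. q \<in># Q \<longrightarrow> typed (jenv (R q)) M' (jtype (R q)) (f (R q))"
    and less: "((\<Sum>q\<in>#Q. f (R q)), msize M') < (total_size (image_mset R Q), msize M2)"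
    unfolding progresses_def by (auto simp: image_mset.compositionality comp_def)
  define g where "g q = Suc (jsize (L q) + f (R q))" for q
  have "typed (jenv q) (App M1 M') (jtype q) (g q)" if "q \<in># Q" for q
  proof -
    have "typed (jenv (L q)) M1 (jtype (L q)) (jsize (L q))"
      using typed1 that unfolding typed_all_def by simp
    with f split that show ?thesis
      by (simp add: app_split_def g_def T_App)
  qed
  moreover have "(\<Sum>q\<in>#Q. g q) = total_size (image_mset L Q) + (\<Sum>q\<in>#Q. f (R q)) + size Q"
    unfolding g_def total_size_def by (induction Q) auto
  moreover have "step_v (App M1 M2) (App M1 M')" using M' unfolding step_v_def by (rule ctx_closure.appR)
  ultimately show ?thesis
    unfolding progresses_def total_size_app_split[OF split]
    using less msize_ge_2[of M1] by (intro exI[of _ "App M1 M'"] exI[of _ g]) auto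
qed

lemma approximated_App:
  assumes split: "\<forall>q. q \<in># Q \<longrightarrow> app_split q (L q) (R q)" and "Q \<noteq> {#}"
    and "approximated (image_mset L Q) M1" and "approximated (image_mset R Q) M2"
    and "\<nexists>M'. v_rule (App M1 M2) M'"
  shows "approximated Q (App M1 M2)"
proof -
  from assms(3) obtain A1 where A1: "apxA A1" "below A1 (embed M1)"
    and forces_L: "\<forall>q. q \<in># image_mset L Q \<longrightarrow> forces A1 (jenv q) (jtype q)"
    unfolding approximated_def by blast
  from assms(4) obtain A2 where A2: "apxA A2" "below A2 (embed M2)"
    and forces_R: "\<forall>q. q \<in># image_mset R Q \<longrightarrow> forces A2 (jenv q) (jtype q)"
    unfolding approximated_def by blast
  have forces1: "\<forall>q. q \<in># Q \<longrightarrow> forces A1 (jenv (L q)) {#Arr (jtype (R q)) (jtype q)#}"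
    using forces_L split by (metis app_split_def image_eqI set_image_mset)
  have forces2: "\<forall>q. q \<in># Q \<longrightarrow> forces A2 (jenv (R q)) (jtype (R q))"
    using forces_R by simp
  have "A1 \<noteq> Bot"
    using forces1 forces_Bot_empty \<open>Q \<noteq> {#}\<close> by fastforce
  then have "apxA (BApp A1 A2)"
    using apxA_BApp_if_not_v_redex A1 A2 assms(5) below_imp_le_btrm by blast
  moreover have "below (BApp A1 A2) (embed (App M1 M2))"
    using A1(2) A2(2) by (auto intro: below.appL below.appR below.trans)
  moreover have "forces (BApp A1 A2) (jenv q) (jtype q)" if "q \<in># Q" for q
    using forces_BApp[OF forces1[rule_format, OF that] forces2[rule_format, OF that]] split that
    by (simp add: app_split_def)
  ultimately show ?thesis unfolding approximated_def by blast
qed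

lemma approximated_or_progresses:
  "typed_all Q M \<Longrightarrow> Q \<noteq> {#} \<Longrightarrow> approximated Q M \<or> progresses Q M"
proof (induction M arbitrary: Q)
  case (Var x)
  have "forces (BVar x) (jenv q) (jtype q)" if "q \<in># Q" for q
  proof -
    have "jenv q = 0(x := jtype q)"
      using Var.prems(1) that unfolding typed_all_def by (auto elim: typed_VarE)
    then show ?thesis using forces_BVar by simp
  qed
  moreover have "apxA (BVar x)" "below (BVar x) (embed (Var x))" by (auto intro: A_B B_var below.refl)
  ultimately show ?case unfolding approximated_def by auto
next
  case (Lam M)
  from Lam.prems(1) obtain Pf where Q: "\<forall>q. q \<in># Q \<longrightarrow> q = lam_jdg (Pf q)"
    and typed: "typed_all (\<Sum>q\<in>#Q. image_mset prem_jdg (Pf q)) M"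
    by (rule typed_all_LamE)
  show ?case
  proof (cases "\<forall>q. q \<in># Q \<longrightarrow> Pf q = {#}")
    case True
    with Q show ?thesis using approximated_Lam_no_premises by blast
  next
    case False
    then have "(\<Sum>q\<in>#Q. image_mset prem_jdg (Pf q)) \<noteq> {#}" by auto
    from Lam.IH[OF typed this] show ?thesis using Q approximated_Lam progresses_Lam by blast
  qed
next
  case (App M1 M2)
  from App.prems(1) obtain L R where split: "\<forall>q. q \<in># Q \<longrightarrow> app_split q (L q) (R q)"
    and typed1: "typed_all (image_mset L Q) M1" and typed2: "typed_all (image_mset R Q) M2"
    by (rule typed_all_AppE)
  have "image_mset L Q \<noteq> {#}" "image_mset R Q \<noteq> {#}" using App.prems(2) by auto
  with App.IH typed1 typed2
  consider "progresses (image_mset L Q) M1" | "progresses (image_mset R Q) M2"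
    | "approximated (image_mset L Q) M1" "approximated (image_mset R Q) M2"
    by blast
  then show ?case
  proof cases
    case 3
    show ?thesis
    proof (cases "\<exists>M'. v_rule (App M1 M2) M'")
      case True
      then show ?thesis using progresses_v_rule App.prems by blast
    next
      case False
      then show ?thesis using approximated_App[OF split App.prems(2) 3] by blast
    qed
  qed (use progresses_AppL progresses_AppR split typed1 typed2 in blast)+
qed

lemma reduces_to_approximated:
  "typed_all Q M \<Longrightarrow> Q \<noteq> {#} \<Longrightarrow> \<exists>M'. red_v M M' \<and> approximated Q M'"
proof (induction "(total_size Q, msize M)" arbitrary: Q M rule: less_induct)
  case less
  from approximated_or_progresses[OF less.prems] show ?case
  proof
    assume "progresses Q M"
    then obtain M' f where M': "step_v M M'"
      and f: "\<forall>q. q \<in># Q \<longrightarrow> typed (jenv q) M' (jtype q) (f q)"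
      and smaller: "((\<Sum>q\<in>#Q. f q), msize M') < (total_size Q, msize M)"
      unfolding progresses_def by blast
    define Q' where "Q' = image_mset (\<lambda>q. Jdg (jenv q) (jtype q) (f q)) Q"
    have "typed_all Q' M'" "Q' \<noteq> {#}" "total_size Q' = (\<Sum>q\<in>#Q. f q)"
      using f less.prems(2) by (auto simp: Q'_def typed_all_def total_size_def image_mset.compositionality comp_def)
    with less.hyps smaller obtain M'' where "red_v M' M''" "approximated Q' M''"
      by metis
    moreover have "approximated Q M''"
    proof -
      from \<open>approximated Q' M''\<close> obtain A where A: "apxA A" "below A (embed M'')"
        and forces: "\<forall>q'. q' \<in># Q' \<longrightarrow> forces A (jenv q') (jtype q')"
        unfolding approximated_def by blast
      have "forces A (jenv q) (jtype q)" if "q \<in># Q" for q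
        using forces[rule_format, of "Jdg (jenv q) (jtype q) (f q)"] that by (simp add: Q'_def)
      with A show ?thesis unfolding approximated_def by blast
    qed
    ultimately show ?thesis using M' by (meson converse_rtranclp_into_rtranclp)
  qed blast
qed

section \<open>Equal approximants give observational equivalence\<close>

lemma typings_approximant:
  assumes "(G, t) \<in> typings M"
  obtains A where "A \<in> approximants M" and "forces A G t"
proof -
  from assms obtain n where "typed_all {#Jdg G t n#} M" unfolding typings_def typed_all_def by auto
  from reduces_to_approximated[OF this] obtain M' A
    where "red_v M M'" "apxA A" "below A (embed M')" "forces A G t"
    unfolding approximated_def by auto
  with that show thesis unfolding approximants_def by blast
qed

lemma typings_mono_approximants:
  assumes "approximants M \<subseteq> approximants N"
  shows "typings M \<subseteq> typings N"
proof clarify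
  fix G t assume "(G, t) \<in> typings M"
  then obtain A where "A \<in> approximants N" "forces A G t" using assms typings_approximant by blast
  then obtain N' where "red_v N N'" "(G, t) \<in> typings N'"
    unfolding approximants_def forces_def using below_imp_le_btrm by blast
  then show "(G, t) \<in> typings N" using typings_red_v by blast
qed

theorem theorem4p16:
  fixes M N :: trm
  assumes "BT M = BT N"
  shows "obs_equiv M N"
proof -
  have "typings M = typings N"
    using assms typings_mono_approximants unfolding BT_def by blast
  then show ?thesis by (rule obs_equiv_if_typings_eq)
qed

end
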